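(* Let $E$ be a real non-zero essential matrix and let $(R_a, R_b)$ be its twisted pair of rotations. Suppose that for some $\tau \in [-1,3]$, $$\frac{1}{2}(\tau^2 - 1)\operatorname{tr}(EE^{\mathrm T}) + (\tau + 1)\operatorname{tr}(E^2) - \tau\,(\operatorname{tr} E)^2 = 0.$$ Then $\tau = \operatorname{tr} R_a$ or $\tau = \operatorname{tr} R_b$.
   Context: For a 3-vector $a$, $[a]_\times$ denotes the $3\times 3$ skew-symmetric matrix with $[a]_\times b = a\times b$ for every $b$. An essential matrix is a matrix of the form $E = [t]_\times R$ with $R\in\mathrm{SO}(3)$ and $t\in\mathbb{R}^3$. For a real non-zero essential matrix $E$, the twisted pair of rotations is the pair $R_a, R_b \in \mathrm{SO}(3)$ defined as follows. Write $E = [t]_\times R_a$ with $t \neq 0$, and set $R_b = \left(\frac{2tt^{\mathrm T}}{\|t\|^2} - I\right) R_a$. Then $E \sim [t]_\times R_b$, where $\sim$ denotes equality up to a non-zero scalar factor. Moreover, $R_a$ and $R_b$ are exactly the rotations $R$ for which $E \sim [t']_\times R$ for some $t'\in\mathbb{R}^3$. *)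

theory Defs
  imports "HOL-Analysis.Analysis"
begin

definition skew :: "real^3 \<Rightarrow> real^3^3" where
  "skew a = matrix (\<lambda>b. cross3 a b)"

definition essential :: "real^3^3 \<Rightarrow> bool" where
  "essential E \<longleftrightarrow> (\<exists>t R. rotation_matrix R \<and> E = skew t ** R)"

definition twist :: "real^3 \<Rightarrow> real^3^3 \<Rightarrow> real^3^3" where
  "twist t Ra = ((\<chi> i j. 2 * (t$i) * (t$j) / (norm t)^2) - mat 1) ** Ra"

end

theory Submission
  imports Defs
begin

text \<open>With s = |t|^2, p = t^T R_a t and a = tr R_a, a coordinate computation using
  R_a^T R_a = I and det R_a = 1 gives tr(E E^T) = 2s, tr(E^2) - (tr E)^2 = -2p and
  tr(E^2) = s + 2ap - s a^2, while s tr R_b = 2p - s a. Substituting, the left-hand side of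
  the hypothesis factors as s (\<tau> - tr R_a)(\<tau> - tr R_b), so it vanishes only at the two
  traces.\<close>

lemma skew_entries: "skew t = (\<chi> i j. if i=1 then (if j=1 then 0 else if j=2 then -(t$3) else t$2)
  else if i=2 then (if j=1 then t$3 else if j=2 then 0 else -(t$1))
  else (if j=1 then -(t$2) else if j=2 then t$1 else 0))"
  unfolding skew_def matrix_def
  by (simp add: vec_eq_iff forall_3 cross3_def axis_def vector_def)

lemma trace_3: "trace (A::real^3^3) = A$1$1 + A$2$2 + A$3$3"
  by (simp add: trace_def sum_3)

lemma matrix_mult_3: "((A::real^3^3) ** B)$i$j = A$i$1*B$1$j + A$i$2*B$2$j + A$i$3*B$3$j"
  by (simp add: matrix_matrix_mult_def sum_3)

lemma skew_0: "skew 0 = 0"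
  by (simp add: skew_def matrix_def vec_eq_iff)

lemma orthogonal_matrix_3_entries:
  fixes R :: "real^3^3"
  assumes "orthogonal_matrix R"
  shows "R$1$1*R$1$1+R$2$1*R$2$1+R$3$1*R$3$1 = 1"
    "R$1$1*R$1$2+R$2$1*R$2$2+R$3$1*R$3$2 = 0"
    "R$1$1*R$1$3+R$2$1*R$2$3+R$3$1*R$3$3 = 0"
    "R$1$2*R$1$2+R$2$2*R$2$2+R$3$2*R$3$2 = 1"
    "R$1$2*R$1$3+R$2$2*R$2$3+R$3$2*R$3$3 = 0"
    "R$1$3*R$1$3+R$2$3*R$2$3+R$3$3*R$3$3 = 1"
  using assms[unfolded orthogonal_matrix_def] unfolding vec_eq_iff
  by (simp_all add: matrix_mult_3 transpose_def mat_def forall_3)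

text \<open>det R = 1 matters: for an orthogonal R with det R = -1 the right-hand side changes sign.\<close>

lemma trace_square_minus_square_trace_skew_rotation:
  assumes "rotation_matrix R"
  shows "trace (skew t ** R ** (skew t ** R)) - (trace (skew t ** R))^2 = -2 * (t \<bullet> (R *v t))"
proof -
  have o: "orthogonal_matrix R" and d: "det R = 1" using assms by (auto simp: rotation_matrix_def)
  show ?thesis
    using orthogonal_matrix_3_entries[OF o] d
    by (simp add: det_3 trace_3 matrix_mult_3 skew_entries inner_vec_def matrix_vector_mult_def sum_3) algebra
qed

lemma trace_square_skew_rotation:
  assumes "rotation_matrix R"
  shows "trace (skew t ** R ** (skew t ** R))
    = t \<bullet> t + 2 * trace R * (t \<bullet> (R *v t)) - (t \<bullet> t) * (trace R)^2"
proof -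
  have o: "orthogonal_matrix R" and d: "det R = 1" using assms by (auto simp: rotation_matrix_def)
  show ?thesis
    using orthogonal_matrix_3_entries[OF o] d
    by (simp add: det_3 trace_3 matrix_mult_3 skew_entries inner_vec_def matrix_vector_mult_def sum_3) algebra
qed

lemma trace_skew_mult_transpose:
  assumes "orthogonal_matrix R"
  shows "trace (skew t ** R ** transpose (skew t ** R)) = 2 * (t \<bullet> t)"
proof -
  have "skew t ** R ** transpose (skew t ** R) = skew t ** (R ** transpose R) ** transpose (skew t)"
    by (simp add: matrix_transpose_mul matrix_mul_assoc)
  also have "\<dots> = skew t ** transpose (skew t)"
    using assms by (simp add: orthogonal_matrix_def)
  finally show ?thesis
    by (simp add: trace_3 matrix_mult_3 skew_entries transpose_def inner_vec_def sum_3
        power2_eq_square algebra_simps)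
qed

lemma matrix_diff_rdistrib: "((A::'a::ring_1^'n^'m) - B) ** C = A ** C - B ** C"
  by (simp add: matrix_matrix_mult_def vec_eq_iff sum_subtractf algebra_simps)

text \<open>For t = 0 both sides are -tr R, because division by zero yields 0.\<close>

lemma trace_twist: "trace (twist t R) = 2 * (t \<bullet> (R *v t)) / (t \<bullet> t) - trace R"
proof -
  have "trace ((\<chi> i j. 2 * (t$i) * (t$j) / (norm t)^2) ** R) = 2 * (t \<bullet> (R *v t)) / (t \<bullet> t)"
    by (simp add: trace_3 matrix_mult_3 inner_vec_def matrix_vector_mult_def sum_3
        power2_norm_eq_inner add_divide_distrib algebra_simps)
  then show ?thesis
    by (simp add: twist_def matrix_diff_rdistrib trace_sub)
qed

lemma trace_polynomial_skew_rotation_eq: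
  fixes t :: "real^3" and R :: "real^3^3" and \<tau> :: real
  assumes "rotation_matrix R"
  defines "E \<equiv> skew t ** R"
  shows "(1/2) * (\<tau>^2 - 1) * trace (E ** transpose E) + (\<tau> + 1) * trace (E ** E) - \<tau> * (trace E)^2
    = (t \<bullet> t) * (\<tau> - trace R) * (\<tau> - trace (twist t R))"
proof (cases "t = 0")
  case True
  then show ?thesis
    by (simp add: E_def skew_0 trace_def)
next
  case False
  define s where "s = t \<bullet> t"
  define p where "p = t \<bullet> (R *v t)"
  have "s \<noteq> 0"
    using False by (simp add: s_def)
  then have twist: "s * trace (twist t R) = 2 * p - s * trace R"
    by (simp add: trace_twist s_def p_def field_simps)
  have "orthogonal_matrix R"
    using assms(1) by (simp add: rotation_matrix_def)
  then have "trace (E ** transpose E) = 2 * s"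
    by (simp add: E_def s_def trace_skew_mult_transpose)
  moreover have "(trace E)^2 = trace (E ** E) + 2 * p"
    using trace_square_minus_square_trace_skew_rotation[OF assms(1), of t] by (simp add: E_def p_def)
  moreover have "trace (E ** E) = s + 2 * trace R * p - s * (trace R)^2"
    using trace_square_skew_rotation[OF assms(1), of t] by (simp add: E_def s_def p_def)
  ultimately show ?thesis
    using twist by (simp add: s_def[symmetric]) algebra
qed

theorem proposition2:
  fixes E :: "real^3^3" and t :: "real^3" and Ra :: "real^3^3" and \<tau> :: real
  assumes "essential E" and "E \<noteq> 0"
    and "t \<noteq> 0" and "rotation_matrix Ra" and "E = skew t ** Ra"
    and "-1 \<le> \<tau>" and "\<tau> \<le> 3"
    and "(1/2) * (\<tau>^2 - 1) * trace (E ** transpose E) + (\<tau> + 1) * trace (E ** E)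
           - \<tau> * (trace E)^2 = 0"
  shows "\<tau> = trace Ra \<or> \<tau> = trace (twist t Ra)"
proof -
  have "(t \<bullet> t) * (\<tau> - trace Ra) * (\<tau> - trace (twist t Ra)) = 0"
    using assms(8) trace_polynomial_skew_rotation_eq[OF assms(4), where t = t and \<tau> = \<tau>]
    by (simp add: assms(5))
  then show ?thesis
    using assms(3) by simp
qed

end
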